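(* Let $f:\mathbb{R}^n\to\mathbb{R}$ be convex and continuously differentiable, with $|f(x)-f(y)|\le L_0\|x-y\|$ and $\|\nabla f(x)-\nabla f(y)\|\le L_1\|x-y\|$ for all $x,y$, and let $x^*$ be a minimizer of $f$ with $f^*=f(x^* )$. Let $\tilde f(x;\xi)=f(x)[1+\nu(x;\xi)]$, where $\nu$ is i.i.d. (across all evaluations) with $\mathbb{E}[\nu]=0$, variance $\sigma_r^2>0$, $\mathbb{E}[\frac{1}{1+\nu}]\le b$, and support in $[-a,a]$ for some $a<1$. Given $x_k$ with $f(x_k)\neq0$, draw a standard Gaussian $u_k\in\mathbb{R}^n$ independent of the noise, set $\mu_k=\tilde\mu=C_4\sqrt{|\tilde f(x_k;\xi_{k'})|}$ with $C_4=\left[\frac{16\sigma_r^2 n}{L_1^2(1+3\sigma_r^2)(n+6)^3}\right]^{1/4}$, and $$s_{\tilde\mu}=\frac{\tilde f(x_k+\mu_k u_k;\xi_k)-\tilde f(x_k;\xi_{k-1})}{\mu_k}u_k,$$ where the noise in the three evaluations (indexed by $\xi_{k'},\xi_k,\xi_{k-1}$) is independent. Then $$\mathbb{E}[\langle s_{\tilde\mu},x_k-x^*\rangle]\ge f(x_k)-f^*-\frac{C_4^2L_1 n}{2}|f(x_k)|,$$ where the expectation is over $u_k,\xi_k,\xi_{k-1},\xi_{k'}$.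
   Context: $\langle\cdot,\cdot\rangle$ is the Euclidean inner product; "standard Gaussian" means mean $0$ and covariance $I_n$. *)

theory Defs
  imports "HOL-Probability.Probability"
begin

definition std_gaussian :: "'a::euclidean_space measure" where
  "std_gaussian = density lborel
     (\<lambda>x. ennreal ((2 * pi) powr (- real DIM('a) / 2) * exp (- (norm x)\<^sup>2 / 2)))"

end

theory Submission
  imports Defs
begin

text \<open>For fixed noise \<open>(\<nu>', \<nu>\<^sub>1, \<nu>\<^sub>0)\<close> the expectation over \<open>u\<close> equals
  \<open>(1 + \<nu>\<^sub>1) E[f(x + \<mu> u) \<langle>u, x - x\<^sup>*\<rangle>] / \<mu>\<close>: the term with \<open>\<nu>\<^sub>0\<close> vanishes because
  \<open>E u = 0\<close>. A one-sided Gaussian integration by parts, obtained from the Cameron--Martin shift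
  formula and convexity, bounds \<open>E[f(x + \<mu> u) \<langle>u, x - x\<^sup>*\<rangle>] / \<mu>\<close> below by
  \<open>E f(x + \<mu> u) - E f(x\<^sup>* + \<mu> u)\<close>; the tangent inequality gives \<open>E f(x + \<mu> u) \<ge> f(x)\<close> and
  the descent lemma gives \<open>E f(x\<^sup>* + \<mu> u) \<le> f(x\<^sup>*) + \<mu>\<^sup>2 L\<^sub>1 n / 2\<close>. Since
  \<open>\<mu>\<^sup>2 = C\<^sub>4\<^sup>2 |f(x)| (1 + \<nu>')\<close> and the noises are independent with mean zero, averaging over them
  gives the claim.\<close>

section \<open>The standard Gaussian measure\<close>

definition std_gaussian_density :: "'a::euclidean_space \<Rightarrow> real" where
  "std_gaussian_density x = (2 * pi) powr (- real DIM('a) / 2) * exp (- (norm x)\<^sup>2 / 2)"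

lemma borel_measurable_std_gaussian_density[measurable]:
  "std_gaussian_density \<in> borel_measurable borel"
  unfolding std_gaussian_density_def by measurable

lemma std_gaussian_density_nonneg: "0 \<le> std_gaussian_density x"
  unfolding std_gaussian_density_def by simp

lemma std_gaussian_eq_density:
  "std_gaussian = density lborel (\<lambda>x. ennreal (std_gaussian_density x))"
  unfolding std_gaussian_def std_gaussian_density_def by simp

lemma sets_std_gaussian[measurable_cong, simp]: "sets std_gaussian = sets borel"
  by (simp add: std_gaussian_def)

lemma space_std_gaussian[simp]: "space std_gaussian = UNIV"
  by (simp add: std_gaussian_def)

lemma norm_sq_eq_sum_Basis: "(norm (x::'a::euclidean_space))\<^sup>2 = (\<Sum>b\<in>Basis. (x \<bullet> b)\<^sup>2)"
  by (subst power2_norm_eq_inner, subst euclidean_inner, simp add: power2_eq_square)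

lemma std_gaussian_density_eq_prod:
  "std_gaussian_density (x::'a::euclidean_space) = (\<Prod>b\<in>Basis. std_normal_density (x \<bullet> b))"
proof -
  have "(2 * pi) powr (- real DIM('a) / 2) = ((2 * pi) powr (-1/2)) ^ DIM('a)"
    by (simp add: powr_realpow[symmetric] powr_powr)
  also have "(2 * pi) powr (-1/2) = 1 / sqrt (2 * pi)"
    by (simp add: powr_minus_divide powr_half_sqrt)
  finally have const: "(2 * pi) powr (- real DIM('a) / 2) = (\<Prod>b\<in>(Basis::'a set). 1 / sqrt (2 * pi))"
    by simp
  have exp_eq: "exp (- (norm x)\<^sup>2 / 2) = (\<Prod>b\<in>(Basis::'a set). exp (- (x \<bullet> b)\<^sup>2 / 2))"
    unfolding norm_sq_eq_sum_Basis by (simp add: exp_sum[symmetric] sum_negf sum_divide_distrib)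
  show ?thesis
    unfolding std_gaussian_density_def const exp_eq std_normal_density_def prod.distrib[symmetric] ..
qed

lemma nn_integral_std_gaussian_density_prod:
  assumes [measurable]: "\<And>b. b \<in> Basis \<Longrightarrow> F b \<in> borel_measurable borel"
  shows "(\<integral>\<^sup>+x. ennreal (std_gaussian_density (x::'a::euclidean_space)) * (\<Prod>b\<in>Basis. F b (x \<bullet> b)) \<partial>lborel)
      = (\<Prod>b\<in>Basis. \<integral>\<^sup>+y. ennreal (std_normal_density y) * F b y \<partial>lborel)"
proof -
  have "(\<integral>\<^sup>+x. ennreal (std_gaussian_density (x::'a)) * (\<Prod>b\<in>Basis. F b (x \<bullet> b)) \<partial>lborel)
      = (\<integral>\<^sup>+x. (\<Prod>b\<in>Basis. ennreal (std_normal_density (x \<bullet> b)) * F b (x \<bullet> b)) \<partial>lborel)"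
    by (simp add: std_gaussian_density_eq_prod prod.distrib prod_ennreal normal_density_nonneg)
  also have "\<dots> = (\<Prod>b\<in>Basis. \<integral>\<^sup>+y. ennreal (std_normal_density y) * F b y \<partial>lborel)"
    by (rule nn_integral_lborel_prod) auto
  finally show ?thesis .
qed

lemma nn_integral_std_normal_density: "(\<integral>\<^sup>+y. ennreal (std_normal_density y) \<partial>lborel) = 1"
  by (subst nn_integral_eq_integral) (auto simp: normal_density_nonneg)

lemma nn_integral_std_normal_density_mult_sq:
  "(\<integral>\<^sup>+y. ennreal (std_normal_density y * y\<^sup>2) \<partial>lborel) = 1"
proof -
  have "integral\<^sup>L lborel (\<lambda>x. std_normal_density x * x ^ 2) = 1"
    using integral_std_normal_moment_even[of 1] by (simp add: fact_numeral)
  then show ?thesis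
    using integrable_std_normal_moment[of 2]
    by (subst nn_integral_eq_integral) (auto simp: normal_density_nonneg)
qed

lemma prob_space_std_gaussian: "prob_space (std_gaussian :: 'a::euclidean_space measure)"
proof
  have "emeasure (std_gaussian :: 'a measure) (space std_gaussian)
     = (\<integral>\<^sup>+x. ennreal (std_gaussian_density (x::'a)) * (\<Prod>b\<in>Basis. (\<lambda>_. 1) (x \<bullet> b)) \<partial>lborel)"
    by (simp add: std_gaussian_eq_density emeasure_density)
  also have "\<dots> = 1"
    by (subst nn_integral_std_gaussian_density_prod) (auto simp: nn_integral_std_normal_density)
  finally show "emeasure (std_gaussian :: 'a measure) (space std_gaussian) = 1" .
qed

interpretation std_gaussian: prob_space "std_gaussian :: 'a::euclidean_space measure"
  by (rule prob_space_std_gaussian)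

lemma nn_integral_std_gaussian_coordinate_sq:
  fixes b :: "'a::euclidean_space"
  assumes "b \<in> Basis"
  shows "(\<integral>\<^sup>+x. ennreal ((x \<bullet> b)\<^sup>2) \<partial>(std_gaussian::'a measure)) = 1"
proof -
  let ?F = "\<lambda>b' y. if b' = b then ennreal (y\<^sup>2) else 1"
  have "(\<integral>\<^sup>+x. ennreal ((x \<bullet> b)\<^sup>2) \<partial>(std_gaussian::'a measure))
      = (\<integral>\<^sup>+x. ennreal (std_gaussian_density (x::'a)) * (\<Prod>b'\<in>Basis. ?F b' (x \<bullet> b')) \<partial>lborel)"
    using assms by (simp add: std_gaussian_eq_density nn_integral_density)
  also have "\<dots> = (\<Prod>b'\<in>Basis. \<integral>\<^sup>+y. ennreal (std_normal_density y) * ?F b' y \<partial>lborel)"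
    by (subst nn_integral_std_gaussian_density_prod) auto
  also have "\<dots> = (\<Prod>b'\<in>(Basis::'a set). 1)"
  proof (rule prod.cong[OF refl])
    fix b' :: 'a
    show "(\<integral>\<^sup>+y. ennreal (std_normal_density y) * ?F b' y \<partial>lborel) = 1"
      by (cases "b' = b") (simp_all add: nn_integral_std_normal_density
          nn_integral_std_normal_density_mult_sq ennreal_mult[symmetric])
  qed
  finally show ?thesis by simp
qed

lemma nn_integral_std_gaussian_norm_sq:
  "(\<integral>\<^sup>+x. ennreal ((norm x)\<^sup>2) \<partial>(std_gaussian::'a::euclidean_space measure)) = real DIM('a)"
proof -
  have "(\<integral>\<^sup>+x. ennreal ((norm x)\<^sup>2) \<partial>(std_gaussian::'a measure))
     = (\<integral>\<^sup>+x. (\<Sum>b\<in>Basis. ennreal ((x \<bullet> b)\<^sup>2)) \<partial>(std_gaussian::'a measure))"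
    by (simp add: norm_sq_eq_sum_Basis)
  also have "\<dots> = (\<Sum>b\<in>Basis. \<integral>\<^sup>+x. ennreal ((x \<bullet> b)\<^sup>2) \<partial>(std_gaussian::'a measure))"
    by (rule nn_integral_sum) auto
  also have "\<dots> = (\<Sum>b\<in>(Basis::'a set). 1)"
    by (intro sum.cong refl nn_integral_std_gaussian_coordinate_sq)
  finally show ?thesis by (simp add: ennreal_of_nat_eq_real_of_nat)
qed

lemma integrable_std_gaussian_norm_sq:
  "integrable std_gaussian (\<lambda>u::'a::euclidean_space. (norm u)\<^sup>2)"
  by (rule integrableI_nn_integral_finite[OF _ _ nn_integral_std_gaussian_norm_sq]) auto

lemma integral_std_gaussian_norm_sq:
  "(\<integral>u. (norm u)\<^sup>2 \<partial>(std_gaussian::'a::euclidean_space measure)) = real DIM('a)"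
  by (subst integral_eq_nn_integral) (auto simp: nn_integral_std_gaussian_norm_sq)

lemma std_gaussian_density_diff:
  "std_gaussian_density (w - v) = std_gaussian_density (w::'a::euclidean_space) * exp (w \<bullet> v - (norm v)\<^sup>2 / 2)"
proof -
  have "(norm (w - v))\<^sup>2 = (norm w)\<^sup>2 - 2 * (w \<bullet> v) + (norm v)\<^sup>2"
    by (simp add: power2_norm_eq_inner inner_diff_left inner_diff_right inner_commute)
  then have "- (norm (w - v))\<^sup>2 / 2 = - (norm w)\<^sup>2 / 2 + (w \<bullet> v - (norm v)\<^sup>2 / 2)"
    by (simp add: field_simps)
  then show ?thesis
    unfolding std_gaussian_density_def by (simp add: exp_add[symmetric])
qed

lemma distr_std_gaussian_translate:
  fixes v :: "'a::euclidean_space"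
  shows "distr std_gaussian borel (\<lambda>u. u + v) =
         density std_gaussian (\<lambda>u. ennreal (exp (u \<bullet> v - (norm v)\<^sup>2 / 2)))"
proof (rule measure_eqI)
  fix A assume "A \<in> sets (distr std_gaussian borel (\<lambda>u. u + v))"
  then have [measurable]: "A \<in> sets borel" by simp
  define G where "G w = ennreal (std_gaussian_density (w - v)) * indicator A w" for w
  have [measurable]: "G \<in> borel_measurable borel" unfolding G_def by measurable
  have "emeasure (distr std_gaussian borel (\<lambda>u. u + v)) A
      = (\<integral>\<^sup>+u. indicator A u \<partial>distr std_gaussian borel (\<lambda>u. u + v))"
    by (rule nn_integral_indicator[symmetric]) simp
  also have "\<dots> = (\<integral>\<^sup>+u. indicator A (u + v) \<partial>std_gaussian)"
    by (subst nn_integral_distr) auto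
  also have "\<dots> = (\<integral>\<^sup>+u. G (v + u) \<partial>lborel)"
    by (simp add: std_gaussian_eq_density nn_integral_density G_def add.commute)
  also have "\<dots> = (\<integral>\<^sup>+u. G u \<partial>distr lborel borel ((+) v))"
    by (subst nn_integral_distr) auto
  also have "\<dots> = (\<integral>\<^sup>+u. G u \<partial>lborel)"
    by (simp add: lborel_distr_plus)
  also have "\<dots> = emeasure (density std_gaussian (\<lambda>u. ennreal (exp (u \<bullet> v - (norm v)\<^sup>2 / 2)))) A"
    by (simp add: emeasure_density std_gaussian_eq_density nn_integral_density G_def
        std_gaussian_density_diff ennreal_mult std_gaussian_density_nonneg mult.commute mult.left_commute)
  finally show "emeasure (distr std_gaussian borel (\<lambda>u. u + v)) A =
      emeasure (density std_gaussian (\<lambda>u. ennreal (exp (u \<bullet> v - (norm v)\<^sup>2 / 2)))) A" .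
qed simp

lemma integrable_std_gaussian_translate_iff:
  fixes v :: "'a::euclidean_space" and G :: "'a \<Rightarrow> real"
  assumes [measurable]: "G \<in> borel_measurable borel"
  shows "integrable std_gaussian (\<lambda>u. G (u + v)) \<longleftrightarrow>
         integrable std_gaussian (\<lambda>u. exp (u \<bullet> v - (norm v)\<^sup>2 / 2) * G u)"
proof -
  have "integrable std_gaussian (\<lambda>u. G (u + v)) \<longleftrightarrow> integrable (distr std_gaussian borel (\<lambda>u. u + v)) G"
    by (subst integrable_distr_eq) auto
  then show ?thesis
    unfolding distr_std_gaussian_translate by (subst (asm) integrable_density) auto
qed

lemma integral_std_gaussian_translate:
  fixes v :: "'a::euclidean_space" and G :: "'a \<Rightarrow> real"
  assumes [measurable]: "G \<in> borel_measurable borel"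
  shows "(\<integral>u. G (u + v) \<partial>std_gaussian) = (\<integral>u. exp (u \<bullet> v - (norm v)\<^sup>2 / 2) * G u \<partial>std_gaussian)"
proof -
  have "(\<integral>u. G (u + v) \<partial>std_gaussian) = (\<integral>u. G u \<partial>distr std_gaussian borel (\<lambda>u. u + v))"
    by (subst integral_distr) auto
  then show ?thesis
    unfolding distr_std_gaussian_translate by (subst (asm) integral_density) auto
qed

lemma distr_std_gaussian_uminus:
  "distr std_gaussian borel uminus = (std_gaussian :: 'a::euclidean_space measure)"
proof -
  have lborel_uminus: "distr lborel borel uminus = (lborel :: 'a measure)"
    using lborel_affine[of "-1" "0::'a"] by (simp add: density_1)
  have "distr (density lborel (\<lambda>x. ennreal (std_gaussian_density x))) borel uminus
      = density (distr lborel borel uminus) (\<lambda>x::'a. ennreal (std_gaussian_density x))"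
    by (subst density_distr) (auto simp: std_gaussian_density_def)
  then show ?thesis
    unfolding lborel_uminus std_gaussian_eq_density .
qed

lemma integral_std_gaussian_inner:
  "(\<integral>u. w \<bullet> u \<partial>(std_gaussian :: 'a::euclidean_space measure)) = 0"
proof -
  have "(\<integral>u. w \<bullet> u \<partial>(std_gaussian :: 'a measure)) = (\<integral>u. w \<bullet> u \<partial>distr std_gaussian borel uminus)"
    by (simp add: distr_std_gaussian_uminus)
  also have "\<dots> = - (\<integral>u. w \<bullet> u \<partial>(std_gaussian :: 'a measure))"
    by (subst integral_distr) auto
  finally show ?thesis by simp
qed

lemma abs_le_affine_norm_imp_quadratic:
  fixes u :: "'a::real_normed_vector"
  assumes "\<bar>F\<bar> \<le> A + B * norm u" "0 \<le> B"
  shows "\<bar>F\<bar> \<le> (\<bar>A\<bar> + B) * (1 + (norm u)\<^sup>2)"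
proof -
  have "norm u \<le> 1 + (norm u)\<^sup>2"
    using sum_squares_ge_zero[of "norm u - 1/2" 0] by (simp add: power2_eq_square algebra_simps)
  then have "B * norm u \<le> B * (1 + (norm u)\<^sup>2)"
    using assms(2) by (rule mult_left_mono)
  moreover have "A \<le> \<bar>A\<bar> * (1 + (norm u)\<^sup>2)"
    using mult_left_mono[of 1 "1 + (norm u)\<^sup>2" "\<bar>A\<bar>"] by simp
  ultimately show ?thesis
    using assms(1) by (simp add: algebra_simps)
qed

lemma abs_mult_le_affine_norm_imp_quadratic:
  fixes u :: "'a::real_normed_vector"
  assumes F1: "\<bar>F1\<bar> \<le> a1 + b1 * norm u" and F2: "\<bar>F2\<bar> \<le> a2 + b2 * norm u"
    and nonneg: "0 \<le> a1" "0 \<le> b1" "0 \<le> a2" "0 \<le> b2"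
  shows "\<bar>F1 * F2\<bar> \<le> ((a1 + b1) * (a2 + b2)) * (1 + (norm u)\<^sup>2)"
proof -
  define m where "m = max 1 (norm u)"
  have m: "1 \<le> m" "norm u \<le> m" unfolding m_def by auto
  have "\<bar>F1\<bar> \<le> (a1 + b1) * m"
    using F1 mult_left_mono[OF m(2), of b1] mult_left_mono[OF m(1), of a1] nonneg
    by (simp add: distrib_right)
  moreover have "\<bar>F2\<bar> \<le> (a2 + b2) * m"
    using F2 mult_left_mono[OF m(2), of b2] mult_left_mono[OF m(1), of a2] nonneg
    by (simp add: distrib_right)
  ultimately have "\<bar>F1 * F2\<bar> \<le> ((a1 + b1) * (a2 + b2)) * (m * m)"
    unfolding abs_mult using mult_mono[of "\<bar>F1\<bar>" "(a1 + b1) * m" "\<bar>F2\<bar>" "(a2 + b2) * m"] nonneg m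
    by (simp add: ac_simps)
  also have "m * m \<le> 1 + (norm u)\<^sup>2"
    unfolding m_def by (auto simp: max_def power2_eq_square)
  then have "((a1 + b1) * (a2 + b2)) * (m * m) \<le> ((a1 + b1) * (a2 + b2)) * (1 + (norm u)\<^sup>2)"
    using nonneg by (intro mult_left_mono) auto
  finally show ?thesis .
qed

lemma integrable_std_gaussian_quadratic_bound:
  fixes F :: "'a::euclidean_space \<Rightarrow> real"
  assumes "F \<in> borel_measurable borel" and "\<And>u. \<bar>F u\<bar> \<le> C * (1 + (norm u)\<^sup>2)"
  shows "integrable std_gaussian F"
proof (rule Bochner_Integration.integrable_bound)
  show "integrable std_gaussian (\<lambda>u::'a. C * (1 + (norm u)\<^sup>2))"
    using integrable_std_gaussian_norm_sq by auto
  show "AE u in std_gaussian. norm (F u) \<le> norm (C * (1 + (norm (u::'a))\<^sup>2))"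
    using assms(2) by (auto intro: order.trans[OF _ abs_ge_self])
qed (use assms(1) in simp)

lemma integrable_std_gaussian_affine_bound:
  fixes F :: "'a::euclidean_space \<Rightarrow> real"
  assumes "F \<in> borel_measurable borel" and "\<And>u. \<bar>F u\<bar> \<le> A + B * norm u" and "0 \<le> B"
  shows "integrable std_gaussian F"
  by (rule integrable_std_gaussian_quadratic_bound[OF assms(1)
        abs_le_affine_norm_imp_quadratic[OF assms(2,3)]])

lemma integrable_std_gaussian_inner:
  "integrable std_gaussian (\<lambda>u::'a::euclidean_space. w \<bullet> u)"
  by (rule integrable_std_gaussian_affine_bound[where A=0 and B="norm w"])
    (auto intro: Cauchy_Schwarz_ineq2)

lemma integral_std_gaussian_affine:
  "(\<integral>u. c + w \<bullet> u \<partial>(std_gaussian::'a::euclidean_space measure)) = c"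
  using integrable_std_gaussian_inner[of w]
  by (simp add: integral_std_gaussian_inner std_gaussian.prob_space[simplified])

lemma integral_std_gaussian_quadratic:
  "(\<integral>u. c + w \<bullet> u + k * (norm u)\<^sup>2 \<partial>(std_gaussian::'a::euclidean_space measure))
     = c + k * real DIM('a)"
proof -
  have "(\<integral>u. c + w \<bullet> u + k * (norm u)\<^sup>2 \<partial>(std_gaussian::'a measure))
      = (\<integral>u. c + w \<bullet> u \<partial>(std_gaussian::'a measure)) + (\<integral>u. k * (norm u)\<^sup>2 \<partial>(std_gaussian::'a measure))"
    by (intro Bochner_Integration.integral_add Bochner_Integration.integrable_add
        integrable_std_gaussian_inner integrable_mult_right integrable_std_gaussian_norm_sq
        std_gaussian.integrable_const)
  then show ?thesis
    by (simp only: integral_std_gaussian_affine integral_mult_right_zero integral_std_gaussian_norm_sq)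
qed

lemma integrable_std_gaussian_exp_inner_mult:
  fixes F :: "'a::euclidean_space \<Rightarrow> real"
  assumes [measurable]: "F \<in> borel_measurable borel"
    and bound: "\<And>u. \<bar>F u\<bar> \<le> C * (1 + (norm u)\<^sup>2)"
  shows "integrable std_gaussian (\<lambda>u. exp (u \<bullet> v) * F u)"
proof -
  have "\<bar>F 0\<bar> \<le> C" using bound[of 0] by simp
  then have C: "0 \<le> C" by (meson abs_ge_zero order.trans)
  have "integrable std_gaussian (\<lambda>u. F (u + v))"
  proof (rule integrable_std_gaussian_quadratic_bound[where C="C * (2 * (1 + (norm v)\<^sup>2))"])
    fix u :: 'a
    have "(norm (u + v))\<^sup>2 \<le> (norm u + norm v)\<^sup>2"
      by (simp add: norm_triangle_ineq power_mono)
    also have "\<dots> \<le> 2 * (norm u)\<^sup>2 + 2 * (norm v)\<^sup>2"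
      using sum_squares_ge_zero[of "norm u - norm v" 0] by (simp add: power2_eq_square algebra_simps)
    finally have "(norm (u + v))\<^sup>2 \<le> 2 * (norm u)\<^sup>2 + 2 * (norm v)\<^sup>2" .
    moreover have "2 * (1 + (norm v)\<^sup>2) * (1 + (norm u)\<^sup>2)
        = 2 + 2 * (norm v)\<^sup>2 + 2 * (norm u)\<^sup>2 + 2 * ((norm v)\<^sup>2 * (norm u)\<^sup>2)"
      by (simp add: algebra_simps)
    moreover have "0 \<le> (norm v)\<^sup>2 * (norm u)\<^sup>2" by simp
    ultimately have "1 + (norm (u + v))\<^sup>2 \<le> 2 * (1 + (norm v)\<^sup>2) * (1 + (norm u)\<^sup>2)"
      by linarith
    then show "\<bar>F (u + v)\<bar> \<le> C * (2 * (1 + (norm v)\<^sup>2)) * (1 + (norm u)\<^sup>2)"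
      using bound[of "u + v"] mult_left_mono[OF _ C] by (fastforce simp: mult.assoc)
  qed measurable
  then have "integrable std_gaussian
      (\<lambda>u. exp ((norm v)\<^sup>2 / 2) * (exp (u \<bullet> v - (norm v)\<^sup>2 / 2) * F u))"
    by (simp add: integrable_std_gaussian_translate_iff)
  then show ?thesis
    by (simp add: mult.assoc[symmetric] exp_add[symmetric])
qed

lemma integrable_std_gaussian_exp_abs_inner_mult:
  fixes F :: "'a::euclidean_space \<Rightarrow> real"
  assumes [measurable]: "F \<in> borel_measurable borel"
    and bound: "\<And>u. \<bar>F u\<bar> \<le> C * (1 + (norm u)\<^sup>2)"
  shows "integrable std_gaussian (\<lambda>u. exp \<bar>u \<bullet> v\<bar> * F u)"
proof (rule Bochner_Integration.integrable_bound)
  have "\<And>u. \<bar>\<bar>F u\<bar>\<bar> \<le> C * (1 + (norm u)\<^sup>2)" using bound by simp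
  then show "integrable std_gaussian (\<lambda>u. exp (u \<bullet> v) * \<bar>F u\<bar> + exp (u \<bullet> (- v)) * \<bar>F u\<bar>)"
    by (intro Bochner_Integration.integrable_add integrable_std_gaussian_exp_inner_mult) auto
  show "AE u in std_gaussian. norm (exp \<bar>u \<bullet> v\<bar> * F u)
      \<le> norm (exp (u \<bullet> v) * \<bar>F u\<bar> + exp (u \<bullet> (- v)) * \<bar>F u\<bar>)"
  proof (rule AE_I2)
    fix u :: 'a
    have "exp \<bar>u \<bullet> v\<bar> \<le> exp (u \<bullet> v) + exp (u \<bullet> (- v))"
      by (cases "0 \<le> u \<bullet> v") (auto simp: add_increasing add_increasing2 abs_if)
    then show "norm (exp \<bar>u \<bullet> v\<bar> * F u) \<le> norm (exp (u \<bullet> v) * \<bar>F u\<bar> + exp (u \<bullet> (- v)) * \<bar>F u\<bar>)"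
      by (simp add: abs_mult distrib_right[symmetric] mult_right_mono)
  qed
qed measurable

lemma lipschitz_on_UNIV_euclideanI:
  fixes f :: "'a::euclidean_space \<Rightarrow> real"
  assumes "\<And>x y. \<bar>f x - f y\<bar> \<le> L * norm (x - y)"
  shows "L-lipschitz_on UNIV f"
proof (rule lipschitz_onI)
  obtain b :: 'a where "b \<in> Basis" using SOME_Basis by blast
  then have "\<bar>f b - f 0\<bar> \<le> L" using assms[of b 0] by simp
  then show "0 \<le> L" by (meson abs_ge_zero order.trans)
qed (simp add: dist_norm assms)

lemma lipschitz_on_abs_le:
  fixes h :: "'a::real_normed_vector \<Rightarrow> real"
  assumes "K-lipschitz_on UNIV h"
  shows "\<bar>h u\<bar> \<le> \<bar>h 0\<bar> + K * norm u"
  using lipschitz_on_normD[OF assms, of u 0] by simp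

lemma lipschitz_on_compose_scale:
  fixes f :: "'a::real_normed_vector \<Rightarrow> real"
  assumes "K-lipschitz_on UNIV f" "0 \<le> \<mu>"
  shows "(K * \<mu>)-lipschitz_on UNIV (\<lambda>u. f (x + \<mu> *\<^sub>R u))"
proof (rule lipschitz_onI)
  fix u w :: 'a
  have "dist (f (x + \<mu> *\<^sub>R u)) (f (x + \<mu> *\<^sub>R w)) \<le> K * dist (x + \<mu> *\<^sub>R u) (x + \<mu> *\<^sub>R w)"
    by (rule lipschitz_onD[OF assms(1)]) auto
  also have "dist (x + \<mu> *\<^sub>R u) (x + \<mu> *\<^sub>R w) = \<mu> * dist u w"
    using assms(2) by (simp add: dist_norm scaleR_diff_right[symmetric])
  finally show "dist (f (x + \<mu> *\<^sub>R u)) (f (x + \<mu> *\<^sub>R w)) \<le> K * \<mu> * dist u w"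
    by (simp add: mult.assoc)
qed (use lipschitz_on_nonneg[OF assms(1)] assms(2) in simp)

lemma borel_measurable_lipschitz_on:
  "K-lipschitz_on UNIV h \<Longrightarrow> h \<in> borel_measurable borel"
  by (rule borel_measurable_continuous_onI[OF lipschitz_on_continuous_on])

lemma integrable_std_gaussian_lipschitz:
  fixes h :: "'a::euclidean_space \<Rightarrow> real"
  assumes "K-lipschitz_on UNIV h"
  shows "integrable std_gaussian h"
  using lipschitz_on_abs_le[OF assms] lipschitz_on_nonneg[OF assms]
  by (intro integrable_std_gaussian_affine_bound borel_measurable_lipschitz_on[OF assms])

lemma integrable_std_gaussian_lipschitz_mult_inner:
  fixes h :: "'a::euclidean_space \<Rightarrow> real"
  assumes "K-lipschitz_on UNIV h"
  shows "integrable std_gaussian (\<lambda>u. h u * (u \<bullet> d))"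
proof (rule integrable_std_gaussian_quadratic_bound)
  show "(\<lambda>u. h u * (u \<bullet> d)) \<in> borel_measurable borel"
    using borel_measurable_lipschitz_on[OF assms] by measurable
  fix u :: 'a
  have "\<bar>u \<bullet> d\<bar> \<le> 0 + norm d * norm u"
    using Cauchy_Schwarz_ineq2[of u d] by (simp add: mult.commute)
  then show "\<bar>h u * (u \<bullet> d)\<bar> \<le> ((\<bar>h 0\<bar> + K) * (0 + norm d)) * (1 + (norm u)\<^sup>2)"
    using lipschitz_on_abs_le[OF assms] lipschitz_on_nonneg[OF assms]
    by (intro abs_mult_le_affine_norm_imp_quadratic) auto
qed

section \<open>Gaussian integration by parts for convex functions\<close>

lemma abs_exp_minus_one_le:
  fixes y :: real
  shows "\<bar>exp y - 1\<bar> \<le> \<bar>y\<bar> * exp \<bar>y\<bar>"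
proof (cases "0 \<le> y")
  case True
  have "(1 - y) * exp y \<le> exp (- y) * exp y"
    using exp_ge_add_one_self[of "- y"] by (intro mult_right_mono) auto
  then have "exp y - 1 \<le> y * exp y"
    by (simp add: exp_minus field_simps)
  then show ?thesis using True by simp
next
  case False
  have "1 - exp y \<le> - y" using exp_ge_add_one_self[of y] by linarith
  also have "\<dots> \<le> (- y) * exp (- y)" using False by simp
  finally show ?thesis using False by simp
qed

lemma abs_exp_quadratic_difference_quotient_le:
  fixes t z c :: real
  assumes t: "0 < t" "t \<le> 1" and c: "0 \<le> c"
  shows "\<bar>(exp (t * z - t\<^sup>2 * c) - 1) / t\<bar> \<le> (\<bar>z\<bar> + c) * exp (\<bar>z\<bar> + c)"
proof -
  define y where "y = t * z - t\<^sup>2 * c"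
  have "t\<^sup>2 * c \<le> t * c"
    using t c by (intro mult_right_mono) (auto simp: power2_eq_square mult_le_cancel_left1)
  then have "\<bar>y\<bar> \<le> t * (\<bar>z\<bar> + c)"
    unfolding y_def using t c abs_triangle_ineq4[of "t * z" "t\<^sup>2 * c"]
    by (simp add: abs_mult algebra_simps)
  moreover have "t * (\<bar>z\<bar> + c) \<le> \<bar>z\<bar> + c"
    using t c by (intro mult_left_le_one_le) auto
  ultimately have "\<bar>exp y - 1\<bar> \<le> (t * (\<bar>z\<bar> + c)) * exp (\<bar>z\<bar> + c)"
    using abs_exp_minus_one_le[of y] by (smt (verit) exp_gt_zero exp_le_cancel_iff mult_mono abs_ge_zero)
  then show ?thesis
    using t by (simp add: y_def divide_le_eq algebra_simps)
qed

lemma exp_quadratic_difference_quotient_tendsto: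
  fixes z c :: real
  shows "((\<lambda>t. (exp (t * z - t\<^sup>2 * c) - 1) / t) \<longlongrightarrow> z) (at 0)"
proof -
  have "((\<lambda>t. exp (t * z - t\<^sup>2 * c)) has_real_derivative z) (at 0)"
    by (auto intro!: derivative_eq_intros)
  then show ?thesis
    by (simp add: DERIV_def)
qed

lemma convex_on_three_point:
  fixes h :: "'a::real_vector \<Rightarrow> real"
  assumes "convex_on UNIV h" "0 \<le> t"
  shows "(1 + t) * h u \<le> h (u + t *\<^sub>R e) + t * h (u - e)"
proof -
  define s where "s = t / (1 + t)"
  have s: "0 \<le> s" "s \<le> 1" "(1 + t) * (1 - s) = 1" "(1 + t) * s = t" "(1 - s) * t = s"
    using assms(2) by (auto simp: s_def field_simps)
  have "(1 - s) *\<^sub>R (u + t *\<^sub>R e) + s *\<^sub>R (u - e) = u + ((1 - s) * t - s) *\<^sub>R e"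
    by (simp add: algebra_simps)
  also have "\<dots> = u" using s by (simp add: algebra_simps)
  finally have "h u \<le> (1 - s) * h (u + t *\<^sub>R e) + s * h (u - e)"
    using convex_onD[OF assms(1) s(1,2), of "u + t *\<^sub>R e" "u - e"] by simp
  then have "(1 + t) * h u \<le> (1 + t) * ((1 - s) * h (u + t *\<^sub>R e) + s * h (u - e))"
    using assms(2) by (intro mult_left_mono) auto
  also have "\<dots> = ((1 + t) * (1 - s)) * h (u + t *\<^sub>R e) + ((1 + t) * s) * h (u - e)"
    by (simp add: algebra_simps)
  finally have "(1 + t) * h u \<le> ((1 + t) * (1 - s)) * h (u + t *\<^sub>R e) + ((1 + t) * s) * h (u - e)" .
  then show ?thesis using s by simp
qed

lemma integrable_std_gaussian_lipschitz_mult_exp_abs_inner: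
  fixes h :: "'a::euclidean_space \<Rightarrow> real"
  assumes lip: "K-lipschitz_on UNIV h" and c: "0 \<le> c"
  shows "integrable std_gaussian (\<lambda>u. \<bar>h u\<bar> * ((\<bar>u \<bullet> e\<bar> + c) * exp (\<bar>u \<bullet> e\<bar> + c)))"
proof -
  have "integrable std_gaussian (\<lambda>u. exp \<bar>u \<bullet> e\<bar> * (\<bar>h u\<bar> * (\<bar>u \<bullet> e\<bar> + c) * exp c))"
  proof (rule integrable_std_gaussian_exp_abs_inner_mult)
    show "(\<lambda>u. \<bar>h u\<bar> * (\<bar>u \<bullet> e\<bar> + c) * exp c) \<in> borel_measurable borel"
      using borel_measurable_lipschitz_on[OF lip] by measurable
    fix u :: 'a
    have "\<bar>\<bar>u \<bullet> e\<bar> + c\<bar> \<le> c + norm e * norm u"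
      using c Cauchy_Schwarz_ineq2[of u e] by (simp add: mult.commute)
    then have "\<bar>\<bar>h u\<bar> * (\<bar>u \<bullet> e\<bar> + c)\<bar> \<le> ((\<bar>h 0\<bar> + K) * (c + norm e)) * (1 + (norm u)\<^sup>2)"
      using lipschitz_on_abs_le[OF lip, of u] lipschitz_on_nonneg[OF lip] c
      by (intro abs_mult_le_affine_norm_imp_quadratic) auto
    then show "\<bar>\<bar>h u\<bar> * (\<bar>u \<bullet> e\<bar> + c) * exp c\<bar> \<le> ((\<bar>h 0\<bar> + K) * (c + norm e) * exp c) * (1 + (norm u)\<^sup>2)"
      by (simp add: abs_mult mult_right_mono ac_simps)
  qed
  then show ?thesis
    by (simp add: exp_add ac_simps)
qed

lemma std_gaussian_convex_difference_le_quotient: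
  fixes h :: "'a::euclidean_space \<Rightarrow> real"
  assumes cvx: "convex_on UNIV h" and lip: "K-lipschitz_on UNIV h" and t: "0 < t"
  shows "(\<integral>u. h u \<partial>std_gaussian) - (\<integral>u. h (u - e) \<partial>std_gaussian)
       \<le> (\<integral>u. h u * ((exp (t * (u \<bullet> e) - t\<^sup>2 * ((norm e)\<^sup>2 / 2)) - 1) / t) \<partial>std_gaussian)"
proof -
  have hm[measurable]: "h \<in> borel_measurable borel"
    by (rule borel_measurable_lipschitz_on[OF lip])
  have int_translate: "integrable std_gaussian (\<lambda>u. h (u + w))" for w
    using integrable_std_gaussian_lipschitz[OF lipschitz_on_compose_scale[OF lip, of 1 w]]
    by (simp add: add.commute)
  have int_h: "integrable std_gaussian h" and int_minus: "integrable std_gaussian (\<lambda>u. h (u - e))"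
    using int_translate[of 0] int_translate[of "- e"] by simp_all
  define W where "W u = exp (t * (u \<bullet> e) - t\<^sup>2 * ((norm e)\<^sup>2 / 2))" for u
  have W_eq: "exp (u \<bullet> (t *\<^sub>R e) - (norm (t *\<^sub>R e))\<^sup>2 / 2) = W u" for u
    by (simp add: W_def power_mult_distrib)
  have int_W: "integrable std_gaussian (\<lambda>u. W u * h u)"
    using int_translate[of "t *\<^sub>R e"]
    unfolding integrable_std_gaussian_translate_iff[OF hm] W_eq .
  have "(1 + t) * (\<integral>u. h u \<partial>std_gaussian) = (\<integral>u. (1 + t) * h u \<partial>std_gaussian)"
    by simp
  also have "\<dots> \<le> (\<integral>u. h (u + t *\<^sub>R e) + t * h (u - e) \<partial>std_gaussian)"
    using convex_on_three_point[OF cvx] t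
    by (intro integral_mono Bochner_Integration.integrable_add integrable_mult_right
        int_translate int_h int_minus) auto
  also have "\<dots> = (\<integral>u. h (u + t *\<^sub>R e) \<partial>std_gaussian) + t * (\<integral>u. h (u - e) \<partial>std_gaussian)"
    using int_translate[of "t *\<^sub>R e"] int_minus by simp
  also have "(\<integral>u. h (u + t *\<^sub>R e) \<partial>std_gaussian) = (\<integral>u. W u * h u \<partial>std_gaussian)"
    unfolding integral_std_gaussian_translate[OF hm] W_eq ..
  finally have "(\<integral>u. h u \<partial>std_gaussian) - (\<integral>u. h (u - e) \<partial>std_gaussian)
      \<le> ((\<integral>u. W u * h u \<partial>std_gaussian) - (\<integral>u. h u \<partial>std_gaussian)) / t"
    using t by (simp add: field_simps)
  also have "\<dots> = (\<integral>u. (W u * h u - h u) / t \<partial>std_gaussian)"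
    using int_W int_h by simp
  also have "\<dots> = (\<integral>u. h u * ((W u - 1) / t) \<partial>std_gaussian)"
    by (simp add: field_simps)
  finally show ?thesis unfolding W_def .
qed

text \<open>For differentiable \<open>h\<close> the right-hand side is \<open>E[\<nabla>h(u) \<bullet> e]\<close> (Stein's identity), which
  dominates the left-hand side by convexity. Without differentiability the inequality follows by
  letting \<open>t \<rightarrow> 0\<close> in \<open>std_gaussian_convex_difference_le_quotient\<close>, by dominated convergence.\<close>

lemma std_gaussian_stein_ineq:
  fixes h :: "'a::euclidean_space \<Rightarrow> real"
  assumes cvx: "convex_on UNIV h" and lip: "K-lipschitz_on UNIV h"
  shows "(\<integral>u. h u \<partial>std_gaussian) - (\<integral>u. h (u - e) \<partial>std_gaussian)
       \<le> (\<integral>u. h u * (u \<bullet> e) \<partial>std_gaussian)"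
proof -
  have hm[measurable]: "h \<in> borel_measurable borel"
    by (rule borel_measurable_lipschitz_on[OF lip])
  define c where "c = (norm e)\<^sup>2 / 2"
  have c: "0 \<le> c" unfolding c_def by simp
  define q where "q t u = h u * ((exp (t * (u \<bullet> e) - t\<^sup>2 * c) - 1) / t)" for t u
  define D where "D = (\<lambda>u. \<bar>h u\<bar> * ((\<bar>u \<bullet> e\<bar> + c) * exp (\<bar>u \<bullet> e\<bar> + c)))"
  define t where "t = (\<lambda>m. 1 / real (Suc m))"
  have t: "0 < t m" "t m \<le> 1" for m
    by (auto simp: t_def)
  have "t \<longlonglongrightarrow> 0"
    using LIMSEQ_Suc[OF lim_1_over_n] by (simp add: t_def)
  then have t_lim: "filterlim t (at 0) sequentially"
  proof (rule filterlim_atI)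
    show "\<forall>\<^sub>F m in sequentially. t m \<noteq> 0"
      using t(1) by (intro always_eventually) (simp add: less_imp_neq[symmetric])
  qed
  have int_D: "integrable std_gaussian D"
    unfolding D_def by (rule integrable_std_gaussian_lipschitz_mult_exp_abs_inner[OF lip c])
  have "(\<lambda>m. \<integral>u. q (t m) u \<partial>std_gaussian) \<longlonglongrightarrow> (\<integral>u. h u * (u \<bullet> e) \<partial>std_gaussian)"
  proof (rule integral_dominated_convergence[OF _ _ int_D])
    show "AE u in std_gaussian. (\<lambda>m. q (t m) u) \<longlonglongrightarrow> h u * (u \<bullet> e)"
      unfolding q_def
      by (intro AE_I2 tendsto_mult_left filterlim_compose[OF exp_quadratic_difference_quotient_tendsto t_lim])
    show "AE u in std_gaussian. norm (q (t m) u) \<le> D u" for m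
    proof (rule AE_I2)
      fix u :: 'a
      have "\<bar>h u\<bar> * \<bar>(exp (t m * (u \<bullet> e) - (t m)\<^sup>2 * c) - 1) / t m\<bar>
          \<le> \<bar>h u\<bar> * ((\<bar>u \<bullet> e\<bar> + c) * exp (\<bar>u \<bullet> e\<bar> + c))"
        using abs_exp_quadratic_difference_quotient_le[OF t c] by (intro mult_left_mono) auto
      then show "norm (q (t m) u) \<le> D u"
        by (simp add: q_def D_def abs_mult)
    qed
  qed (simp_all add: q_def)
  moreover have "(\<integral>u. h u \<partial>std_gaussian) - (\<integral>u. h (u - e) \<partial>std_gaussian)
      \<le> (\<integral>u. q (t m) u \<partial>std_gaussian)" for m
    unfolding q_def c_def by (rule std_gaussian_convex_difference_le_quotient[OF cvx lip t(1)])
  ultimately show ?thesis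
    by (intro LIMSEQ_le_const) auto
qed

section \<open>Gaussian smoothing of a smooth convex function\<close>

lemma convex_on_compose_affine:
  fixes f :: "'b::real_vector \<Rightarrow> real"
  assumes "convex_on UNIV f" "linear T"
  shows "convex_on UNIV (\<lambda>y. f (x + T y))"
proof (rule convex_onI)
  fix t :: real and a b assume t: "0 < t" "t < 1"
  have "T ((1 - t) *\<^sub>R a + t *\<^sub>R b) = (1 - t) *\<^sub>R T a + t *\<^sub>R T b"
    by (simp add: linear_add[OF assms(2)] linear_scale[OF assms(2)])
  then have "x + T ((1 - t) *\<^sub>R a + t *\<^sub>R b) = (1 - t) *\<^sub>R (x + T a) + t *\<^sub>R (x + T b)"
    by (simp add: algebra_simps)
  then show "f (x + T ((1 - t) *\<^sub>R a + t *\<^sub>R b)) \<le> (1 - t) * f (x + T a) + t * f (x + T b)"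
    using t by (simp add: convex_onD[OF assms(1)])
qed simp

lemma has_real_derivative_along_line:
  fixes f :: "'a::real_inner \<Rightarrow> real"
  assumes "\<And>x. (f has_derivative (\<lambda>h. g x \<bullet> h)) (at x)"
  shows "((\<lambda>s. f (x + s *\<^sub>R v)) has_real_derivative (g (x + s *\<^sub>R v) \<bullet> v)) (at s)"
proof -
  have "((\<lambda>s. x + s *\<^sub>R v) has_derivative (\<lambda>s. s *\<^sub>R v)) (at s)"
    by (auto intro!: derivative_eq_intros)
  from has_derivative_compose[OF this assms]
  have "((\<lambda>s. f (x + s *\<^sub>R v)) has_derivative (\<lambda>t. t * (g (x + s *\<^sub>R v) \<bullet> v))) (at s)"
    by (simp add: o_def)
  then show ?thesis
    by (simp add: has_field_derivative_def mult.commute[of _ "g (x + s *\<^sub>R v) \<bullet> v"])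
qed

lemma convex_on_gradient_ineq:
  fixes f :: "'a::real_inner \<Rightarrow> real"
  assumes cvx: "convex_on UNIV f" and grad: "\<And>x. (f has_derivative (\<lambda>h. g x \<bullet> h)) (at x)"
  shows "f x + g x \<bullet> (y - x) \<le> f y"
proof -
  have "convex_on UNIV (\<lambda>s. f (x + s *\<^sub>R (y - x)))"
    by (rule convex_on_compose_affine[OF cvx]) simp
  moreover have "((\<lambda>s. f (x + s *\<^sub>R (y - x))) has_field_derivative (g x \<bullet> (y - x))) (at 0 within UNIV)"
    using has_real_derivative_along_line[OF grad, of x "y - x" 0] by simp
  ultimately have "f (x + 1 *\<^sub>R (y - x)) - f (x + 0 *\<^sub>R (y - x)) \<ge> (g x \<bullet> (y - x)) * (1 - 0)"
    by (intro convex_on_imp_above_tangent) auto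
  then show ?thesis by simp
qed

lemma lipschitz_gradient_upper_bound:
  fixes f :: "'a::real_inner \<Rightarrow> real"
  assumes grad: "\<And>x. (f has_derivative (\<lambda>h. g x \<bullet> h)) (at x)"
    and lip: "L-lipschitz_on UNIV g"
  shows "f y \<le> f x + g x \<bullet> (y - x) + L / 2 * (norm (y - x))\<^sup>2"
proof -
  define v where "v = y - x"
  define \<phi> where "\<phi> s = f (x + s *\<^sub>R v) - s * (g x \<bullet> v) - L / 2 * s\<^sup>2 * (norm v)\<^sup>2" for s
  have "\<exists>d. (\<phi> has_real_derivative d) (at s) \<and> d \<le> 0" if "0 \<le> s" for s
  proof (intro exI conjI)
    show "(\<phi> has_real_derivative (g (x + s *\<^sub>R v) \<bullet> v - g x \<bullet> v - L * s * (norm v)\<^sup>2)) (at s)"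
      unfolding \<phi>_def
      by (rule derivative_eq_intros has_real_derivative_along_line[OF grad] | simp)+
    have "g (x + s *\<^sub>R v) \<bullet> v - g x \<bullet> v \<le> norm (g (x + s *\<^sub>R v) - g x) * norm v"
      using norm_cauchy_schwarz[of "g (x + s *\<^sub>R v) - g x" v] by (simp add: inner_diff_left)
    also have "\<dots> \<le> L * norm (s *\<^sub>R v) * norm v"
      using lipschitz_on_normD[OF lip, of "x + s *\<^sub>R v" x] by (intro mult_right_mono) auto
    also have "\<dots> = L * s * (norm v)\<^sup>2"
      using that by (simp add: power2_eq_square)
    finally show "g (x + s *\<^sub>R v) \<bullet> v - g x \<bullet> v - L * s * (norm v)\<^sup>2 \<le> 0"
      by simp
  qed
  then have "\<phi> 1 \<le> \<phi> 0"
    by (intro DERIV_nonpos_imp_nonincreasing[of 0 1 \<phi>]) auto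
  then show ?thesis by (simp add: \<phi>_def v_def algebra_simps)
qed

lemma std_gaussian_smoothing_ge:
  fixes f :: "'a::euclidean_space \<Rightarrow> real"
  assumes cvx: "convex_on UNIV f" and grad: "\<And>x. (f has_derivative (\<lambda>h. g x \<bullet> h)) (at x)"
    and lip: "L-lipschitz_on UNIV f" and "0 \<le> \<mu>"
  shows "f x \<le> (\<integral>u. f (x + \<mu> *\<^sub>R u) \<partial>std_gaussian)"
proof -
  have "(\<integral>u. f x + (\<mu> *\<^sub>R g x) \<bullet> u \<partial>std_gaussian) \<le> (\<integral>u. f (x + \<mu> *\<^sub>R u) \<partial>std_gaussian)"
  proof (rule integral_mono)
    show "integrable std_gaussian (\<lambda>u. f x + (\<mu> *\<^sub>R g x) \<bullet> u)"
      by (intro Bochner_Integration.integrable_add std_gaussian.integrable_const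
          integrable_std_gaussian_inner)
    show "integrable std_gaussian (\<lambda>u. f (x + \<mu> *\<^sub>R u))"
      by (rule integrable_std_gaussian_lipschitz[OF lipschitz_on_compose_scale[OF lip \<open>0 \<le> \<mu>\<close>]])
    show "f x + (\<mu> *\<^sub>R g x) \<bullet> u \<le> f (x + \<mu> *\<^sub>R u)" for u
      using convex_on_gradient_ineq[OF cvx grad, of x "x + \<mu> *\<^sub>R u"] by simp
  qed
  then show ?thesis
    by (simp only: integral_std_gaussian_affine)
qed

lemma std_gaussian_smoothing_le:
  fixes f :: "'a::euclidean_space \<Rightarrow> real"
  assumes grad: "\<And>x. (f has_derivative (\<lambda>h. g x \<bullet> h)) (at x)"
    and lip0: "L0-lipschitz_on UNIV f" and lip1: "L1-lipschitz_on UNIV g" and "0 \<le> \<mu>"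
  shows "(\<integral>u. f (x + \<mu> *\<^sub>R u) \<partial>std_gaussian) \<le> f x + \<mu>\<^sup>2 * L1 * real DIM('a) / 2"
proof -
  have "(\<integral>u. f (x + \<mu> *\<^sub>R u) \<partial>std_gaussian)
      \<le> (\<integral>u. f x + (\<mu> *\<^sub>R g x) \<bullet> u + (L1 / 2 * \<mu>\<^sup>2) * (norm u)\<^sup>2 \<partial>std_gaussian)"
  proof (rule integral_mono)
    show "integrable std_gaussian (\<lambda>u. f (x + \<mu> *\<^sub>R u))"
      by (rule integrable_std_gaussian_lipschitz[OF lipschitz_on_compose_scale[OF lip0 \<open>0 \<le> \<mu>\<close>]])
    show "integrable std_gaussian (\<lambda>u. f x + (\<mu> *\<^sub>R g x) \<bullet> u + (L1 / 2 * \<mu>\<^sup>2) * (norm u)\<^sup>2)"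
      by (intro Bochner_Integration.integrable_add std_gaussian.integrable_const
          integrable_std_gaussian_inner integrable_mult_right integrable_std_gaussian_norm_sq)
    show "f (x + \<mu> *\<^sub>R u) \<le> f x + (\<mu> *\<^sub>R g x) \<bullet> u + (L1 / 2 * \<mu>\<^sup>2) * (norm u)\<^sup>2" for u
      using lipschitz_gradient_upper_bound[OF grad lip1, of "x + \<mu> *\<^sub>R u" x] \<open>0 \<le> \<mu>\<close>
      by (simp add: power_mult_distrib)
  qed
  also have "\<dots> = f x + \<mu>\<^sup>2 * L1 * real DIM('a) / 2"
    by (simp only: integral_std_gaussian_quadratic) (simp add: algebra_simps)
  finally show ?thesis .
qed

lemma std_gaussian_smoothing_inner_ge:
  fixes f :: "'a::euclidean_space \<Rightarrow> real"
  assumes cvx: "convex_on UNIV f" and grad: "\<And>x. (f has_derivative (\<lambda>h. g x \<bullet> h)) (at x)"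
    and lip0: "L0-lipschitz_on UNIV f" and lip1: "L1-lipschitz_on UNIV g" and \<mu>: "0 < \<mu>"
  shows "f x - f y - \<mu>\<^sup>2 * L1 * real DIM('a) / 2
       \<le> (\<integral>u. f (x + \<mu> *\<^sub>R u) * (u \<bullet> (x - y)) \<partial>std_gaussian) / \<mu>"
proof -
  define h where "h u = f (x + \<mu> *\<^sub>R u)" for u
  define e where "e = (1 / \<mu>) *\<^sub>R (x - y)"
  have "convex_on UNIV h"
    unfolding h_def by (rule convex_on_compose_affine[OF cvx]) simp
  moreover have "(L0 * \<mu>)-lipschitz_on UNIV h"
    unfolding h_def using lipschitz_on_compose_scale[OF lip0] \<mu> by simp
  ultimately have "(\<integral>u. h u \<partial>std_gaussian) - (\<integral>u. h (u - e) \<partial>std_gaussian)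
      \<le> (\<integral>u. h u * (u \<bullet> e) \<partial>std_gaussian)"
    by (rule std_gaussian_stein_ineq)
  moreover have "h (u - e) = f (y + \<mu> *\<^sub>R u)" for u
    using \<mu> by (simp add: h_def e_def algebra_simps)
  moreover have "(\<integral>u. h u * (u \<bullet> e) \<partial>std_gaussian)
      = (\<integral>u. f (x + \<mu> *\<^sub>R u) * (u \<bullet> (x - y)) \<partial>std_gaussian) / \<mu>"
    by (simp add: h_def e_def)
  moreover have "f x \<le> (\<integral>u. h u \<partial>std_gaussian)"
    unfolding h_def using std_gaussian_smoothing_ge[OF cvx grad lip0] \<mu> by simp
  moreover have "(\<integral>u. f (y + \<mu> *\<^sub>R u) \<partial>std_gaussian) \<le> f y + \<mu>\<^sup>2 * L1 * real DIM('a) / 2"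
    using std_gaussian_smoothing_le[OF grad lip0 lip1] \<mu> by simp
  ultimately show ?thesis by simp
qed

section \<open>Multiplicative noise\<close>

text \<open>The noise \<open>q\<close> of the evaluation at \<open>x\<close> drops out because \<open>E[u] = 0\<close>.\<close>

lemma std_gaussian_noisy_quotient_inner_ge:
  fixes f :: "'a::euclidean_space \<Rightarrow> real"
  assumes cvx: "convex_on UNIV f" and grad: "\<And>x. (f has_derivative (\<lambda>h. g x \<bullet> h)) (at x)"
    and lip0: "L0-lipschitz_on UNIV f" and lip1: "L1-lipschitz_on UNIV g"
    and \<mu>: "0 < \<mu>" and p: "0 \<le> p"
  shows "p * (f x - f y - \<mu>\<^sup>2 * L1 * real DIM('a) / 2)
       \<le> (\<integral>u. ((f (x + \<mu> *\<^sub>R u) * p - f x * q) / \<mu>) * (u \<bullet> (x - y)) \<partial>std_gaussian)"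
proof -
  define d where "d = x - y"
  have "integrable std_gaussian (\<lambda>u. f (x + \<mu> *\<^sub>R u) * (u \<bullet> d))"
    using lipschitz_on_compose_scale[OF lip0, of \<mu>] \<mu>
    by (intro integrable_std_gaussian_lipschitz_mult_inner) simp
  moreover have "((f (x + \<mu> *\<^sub>R u) * p - f x * q) / \<mu>) * (u \<bullet> d)
      = p / \<mu> * (f (x + \<mu> *\<^sub>R u) * (u \<bullet> d)) - f x * q / \<mu> * (d \<bullet> u)" for u
    by (simp add: inner_commute diff_divide_distrib algebra_simps)
  ultimately have "(\<integral>u. ((f (x + \<mu> *\<^sub>R u) * p - f x * q) / \<mu>) * (u \<bullet> d) \<partial>std_gaussian)
      = p / \<mu> * (\<integral>u. f (x + \<mu> *\<^sub>R u) * (u \<bullet> d) \<partial>std_gaussian)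
        - f x * q / \<mu> * (\<integral>u. d \<bullet> u \<partial>std_gaussian)"
    using integrable_std_gaussian_inner[of d] by simp
  also have "\<dots> = p * ((\<integral>u. f (x + \<mu> *\<^sub>R u) * (u \<bullet> d) \<partial>std_gaussian) / \<mu>)"
    by (simp add: integral_std_gaussian_inner)
  finally have "(\<integral>u. ((f (x + \<mu> *\<^sub>R u) * p - f x * q) / \<mu>) * (u \<bullet> d) \<partial>std_gaussian)
      = p * ((\<integral>u. f (x + \<mu> *\<^sub>R u) * (u \<bullet> d) \<partial>std_gaussian) / \<mu>)" .
  moreover have "p * (f x - f y - \<mu>\<^sup>2 * L1 * real DIM('a) / 2)
      \<le> p * ((\<integral>u. f (x + \<mu> *\<^sub>R u) * (u \<bullet> d) \<partial>std_gaussian) / \<mu>)"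
    unfolding d_def using std_gaussian_smoothing_inner_ge[OF cvx grad lip0 lip1 \<mu>] p
    by (rule mult_left_mono)
  ultimately show ?thesis
    unfolding d_def by linarith
qed

lemma abs_noisy_quotient_le:
  fixes f :: "'a::real_inner \<Rightarrow> real"
  assumes lip: "L-lipschitz_on UNIV f" and \<mu>: "0 < \<mu>\<^sub>0" "\<mu>\<^sub>0 \<le> \<mu>"
    and p: "\<bar>p\<bar> \<le> P" and pq: "\<bar>p - q\<bar> \<le> Q"
  shows "\<bar>((f (x + \<mu> *\<^sub>R u) * p - f x * q) / \<mu>) * (u \<bullet> d)\<bar>
       \<le> ((Q * \<bar>f x\<bar> / \<mu>\<^sub>0 + P * L) * norm d) * (1 + (norm u)\<^sup>2)"
proof -
  have L: "0 \<le> L" and PQ: "0 \<le> P" "0 \<le> Q"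
    using lipschitz_on_nonneg[OF lip] p pq by auto
  have "\<bar>f (x + \<mu> *\<^sub>R u) - f x\<bar> \<le> L * (\<mu> * norm u)"
    using lipschitz_on_normD[OF lip, of "x + \<mu> *\<^sub>R u" x] \<mu> by simp
  then have "\<bar>p * (f (x + \<mu> *\<^sub>R u) - f x)\<bar> \<le> P * (L * (\<mu> * norm u))"
    unfolding abs_mult using p by (intro mult_mono) auto
  moreover have "\<bar>f x * (p - q)\<bar> \<le> \<bar>f x\<bar> * Q"
    unfolding abs_mult using pq by (intro mult_left_mono) auto
  moreover have "f (x + \<mu> *\<^sub>R u) * p - f x * q = p * (f (x + \<mu> *\<^sub>R u) - f x) + f x * (p - q)"
    by (simp add: algebra_simps)
  ultimately have "\<bar>f (x + \<mu> *\<^sub>R u) * p - f x * q\<bar> \<le> P * L * \<mu> * norm u + \<bar>f x\<bar> * Q"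
    by (smt (verit, best) mult.assoc)
  then have "\<bar>(f (x + \<mu> *\<^sub>R u) * p - f x * q) / \<mu>\<bar> \<le> P * L * norm u + Q * \<bar>f x\<bar> / \<mu>"
    using \<mu> by (simp add: abs_div divide_le_eq algebra_simps)
  also have "Q * \<bar>f x\<bar> / \<mu> \<le> Q * \<bar>f x\<bar> / \<mu>\<^sub>0"
    using \<mu> PQ by (intro divide_left_mono) auto
  finally have "\<bar>(f (x + \<mu> *\<^sub>R u) * p - f x * q) / \<mu>\<bar> \<le> Q * \<bar>f x\<bar> / \<mu>\<^sub>0 + P * L * norm u"
    by simp
  moreover have "\<bar>u \<bullet> d\<bar> \<le> 0 + norm d * norm u"
    using Cauchy_Schwarz_ineq2[of u d] by (simp add: mult.commute)
  ultimately have "\<bar>((f (x + \<mu> *\<^sub>R u) * p - f x * q) / \<mu>) * (u \<bullet> d)\<bar>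
      \<le> ((Q * \<bar>f x\<bar> / \<mu>\<^sub>0 + P * L) * (0 + norm d)) * (1 + (norm u)\<^sup>2)"
    using \<mu> L PQ by (intro abs_mult_le_affine_norm_imp_quadratic) auto
  then show ?thesis by simp
qed

lemma AE_pair_measure_triple:
  assumes N: "prob_space N" and S[measurable]: "S \<in> sets N" and supp: "AE x in N. x \<in> S"
  shows "AE m in N \<Otimes>\<^sub>M (N \<Otimes>\<^sub>M N). fst m \<in> S \<and> fst (snd m) \<in> S \<and> snd (snd m) \<in> S"
proof -
  interpret N: prob_space N by (rule N)
  interpret NN: pair_prob_space N N by unfold_locales
  interpret M: pair_prob_space N "N \<Otimes>\<^sub>M N" by unfold_locales
  have "AE q in N \<Otimes>\<^sub>M N. fst q \<in> S \<and> snd q \<in> S"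
    by (rule NN.AE_pair_measure) (use supp in \<open>auto elim: eventually_mono\<close>)
  then show ?thesis
    by (intro M.AE_pair_measure) (use supp in \<open>auto elim: eventually_mono\<close>)
qed

lemma integrable_std_gaussian_pair_quadratic_bound:
  fixes F :: "'a::euclidean_space \<times> 'b \<Rightarrow> real"
  assumes M: "prob_space M" and F: "F \<in> borel_measurable (std_gaussian \<Otimes>\<^sub>M M)"
    and bound: "AE p in std_gaussian \<Otimes>\<^sub>M M. \<bar>F p\<bar> \<le> C * (1 + (norm (fst p))\<^sup>2)"
  shows "integrable (std_gaussian \<Otimes>\<^sub>M M) F"
proof (rule Bochner_Integration.integrable_bound[OF _ F])
  interpret M: prob_space M by (rule M)
  interpret P: pair_prob_space "std_gaussian :: 'a measure" M
    by (intro pair_prob_space.intro pair_sigma_finite.intro prob_space_std_gaussian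
        M.prob_space_axioms prob_space_imp_sigma_finite)
  show "integrable (std_gaussian \<Otimes>\<^sub>M M) (\<lambda>p. C * (1 + (norm (fst p :: 'a))\<^sup>2))"
  proof (rule P.Fubini_integrable)
    have eq: "(\<lambda>u::'a. \<integral>m. norm (C * (1 + (norm (fst (u, m)))\<^sup>2)) \<partial>M) = (\<lambda>u::'a. \<bar>C * (1 + (norm u)\<^sup>2)\<bar>)"
      by (simp add: M.prob_space)
    show "integrable std_gaussian (\<lambda>u::'a. \<integral>m. norm (C * (1 + (norm (fst (u, m)))\<^sup>2)) \<partial>M)"
      unfolding eq by (rule integrable_std_gaussian_quadratic_bound[where C="\<bar>C\<bar>"]) (auto simp: abs_mult)
    show "AE u in std_gaussian. integrable M (\<lambda>m. C * (1 + (norm (fst (u :: 'a, m)))\<^sup>2))"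
      by simp
  qed simp
  show "AE p in std_gaussian \<Otimes>\<^sub>M M. norm (F p) \<le> norm (C * (1 + (norm (fst p))\<^sup>2))"
    using bound by (rule eventually_mono) auto
qed

lemma integral_noise_affine_product:
  fixes N :: "real measure"
  assumes N: "prob_space N" and N_borel: "sets N = sets borel"
    and supp: "AE \<nu> in N. \<nu> \<in> {-a..a}" and mean0: "(\<integral>\<nu>. \<nu> \<partial>N) = 0"
  shows "integrable (N \<Otimes>\<^sub>M (N \<Otimes>\<^sub>M N)) (\<lambda>m. (1 + fst (snd m)) * (c - k * (1 + fst m)))"
    and "(\<integral>m. (1 + fst (snd m)) * (c - k * (1 + fst m)) \<partial>(N \<Otimes>\<^sub>M (N \<Otimes>\<^sub>M N))) = c - k"
proof -
  interpret N: prob_space N by (rule N)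
  interpret NN: pair_prob_space N N by unfold_locales
  interpret M: pair_prob_space N "N \<Otimes>\<^sub>M N" by unfold_locales
  note [measurable_cong] = N_borel
  have int_id: "integrable N (\<lambda>\<nu>. \<nu>)"
    by (rule N.integrable_const_bound[where B="\<bar>a\<bar>"]) (use supp in \<open>auto elim: eventually_mono\<close>)
  have mean_affine: "(\<integral>\<nu>. s + t * \<nu> \<partial>N) = s" for s t
    using int_id mean0 N.prob_space by simp
  have "AE m in N \<Otimes>\<^sub>M (N \<Otimes>\<^sub>M N). fst m \<in> {-a..a} \<and> fst (snd m) \<in> {-a..a} \<and> snd (snd m) \<in> {-a..a}"
    by (rule AE_pair_measure_triple[OF N _ supp]) (simp add: N_borel)
  then show int: "integrable (N \<Otimes>\<^sub>M (N \<Otimes>\<^sub>M N)) (\<lambda>m. (1 + fst (snd m)) * (c - k * (1 + fst m)))"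
  proof (rule M.integrable_const_bound[where B="(1 + \<bar>a\<bar>) * (\<bar>c\<bar> + \<bar>k\<bar> * (1 + \<bar>a\<bar>))", OF eventually_mono])
    fix m :: "real \<times> real \<times> real"
    assume "fst m \<in> {-a..a} \<and> fst (snd m) \<in> {-a..a} \<and> snd (snd m) \<in> {-a..a}"
    then have bounds: "\<bar>1 + fst (snd m)\<bar> \<le> 1 + \<bar>a\<bar>" "\<bar>1 + fst m\<bar> \<le> 1 + \<bar>a\<bar>"
      by auto
    have "\<bar>c - k * (1 + fst m)\<bar> \<le> \<bar>c\<bar> + \<bar>k\<bar> * \<bar>1 + fst m\<bar>"
      by (metis abs_mult abs_triangle_ineq4)
    also have "\<dots> \<le> \<bar>c\<bar> + \<bar>k\<bar> * (1 + \<bar>a\<bar>)"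
      using bounds by (intro add_left_mono mult_left_mono) auto
    finally show "norm ((1 + fst (snd m)) * (c - k * (1 + fst m))) \<le> (1 + \<bar>a\<bar>) * (\<bar>c\<bar> + \<bar>k\<bar> * (1 + \<bar>a\<bar>))"
      unfolding real_norm_def abs_mult using bounds by (intro mult_mono) auto
  qed (simp add: N_borel)
  have "(\<integral>y. 1 + fst y \<partial>(N \<Otimes>\<^sub>M N)) = (\<integral>x. 1 + x \<partial>distr (N \<Otimes>\<^sub>M N) N fst)"
    by (subst integral_distr) auto
  also have "\<dots> = 1"
    using mean_affine[of 1 1] by (simp add: N.distr_pair_fst)
  finally have mean_pair: "(\<integral>y. 1 + fst y \<partial>(N \<Otimes>\<^sub>M N)) = 1" .
  have "(\<integral>m. (1 + fst (snd m)) * (c - k * (1 + fst m)) \<partial>(N \<Otimes>\<^sub>M (N \<Otimes>\<^sub>M N)))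
      = integral\<^sup>L (N \<Otimes>\<^sub>M (N \<Otimes>\<^sub>M N)) (\<lambda>(x, y). (1 + fst y) * (c - k * (1 + x)))"
    by (simp add: split_beta')
  also have "\<dots> = (\<integral>x. (\<integral>y. (1 + fst y) * (c - k * (1 + x)) \<partial>(N \<Otimes>\<^sub>M N)) \<partial>N)"
    using int by (intro M.integral_fst[symmetric]) (simp add: split_beta')
  also have "\<dots> = (\<integral>x. (c - k) + (- k) * x \<partial>N)"
    by (subst integral_mult_left_zero) (simp add: mean_pair algebra_simps)
  also have "\<dots> = c - k"
    by (rule mean_affine)
  finally show "(\<integral>m. (1 + fst (snd m)) * (c - k * (1 + fst m)) \<partial>(N \<Otimes>\<^sub>M (N \<Otimes>\<^sub>M N))) = c - k" .
qed

text \<open>\<open>noisy_zo_inner f C x y (u, \<nu>', \<nu>\<^sub>1, \<nu>\<^sub>0)\<close> is \<open>\<langle>s\<^sub>\<mu>, x - y\<rangle>\<close> for the estimator with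
  direction \<open>u\<close> whose three function evaluations carry the noises \<open>\<nu>'\<close> (in the radius
  \<open>\<mu> = C \<surd>|f(x)(1 + \<nu>')|\<close>), \<open>\<nu>\<^sub>1\<close> and \<open>\<nu>\<^sub>0\<close>.\<close>

definition noisy_zo_inner ::
    "('a::real_inner \<Rightarrow> real) \<Rightarrow> real \<Rightarrow> 'a \<Rightarrow> 'a \<Rightarrow> 'a \<times> real \<times> real \<times> real \<Rightarrow> real" where
  "noisy_zo_inner f C x y = (\<lambda>(u, \<nu>', \<nu>1, \<nu>0).
     let \<mu> = C * sqrt \<bar>f x * (1 + \<nu>')\<bar>
     in ((f (x + \<mu> *\<^sub>R u) * (1 + \<nu>1) - f x * (1 + \<nu>0)) / \<mu>) * (u \<bullet> (x - y)))"

lemma noisy_radius_bounds: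
  fixes c C a \<nu> :: real
  assumes "\<nu> \<in> {-a..a}" "a < 1" "c \<noteq> 0" "0 < C"
  shows "0 < C * sqrt (\<bar>c\<bar> * (1 - a))"
    and "C * sqrt (\<bar>c\<bar> * (1 - a)) \<le> C * sqrt \<bar>c * (1 + \<nu>)\<bar>"
    and "(C * sqrt \<bar>c * (1 + \<nu>)\<bar>)\<^sup>2 = C\<^sup>2 * \<bar>c\<bar> * (1 + \<nu>)"
proof -
  have \<nu>: "1 - a \<le> 1 + \<nu>" "\<bar>c * (1 + \<nu>)\<bar> = \<bar>c\<bar> * (1 + \<nu>)"
    using assms(1,2) by (auto simp: abs_mult)
  show "0 < C * sqrt (\<bar>c\<bar> * (1 - a))"
    using assms(2-4) by simp
  show "C * sqrt (\<bar>c\<bar> * (1 - a)) \<le> C * sqrt \<bar>c * (1 + \<nu>)\<bar>"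
    using \<nu> assms(4) by (auto intro!: mult_left_mono)
  show "(C * sqrt \<bar>c * (1 + \<nu>)\<bar>)\<^sup>2 = C\<^sup>2 * \<bar>c\<bar> * (1 + \<nu>)"
    using \<nu> assms(2) by (simp add: power_mult_distrib)
qed

lemma integrable_noisy_zo_inner:
  fixes f :: "'a::euclidean_space \<Rightarrow> real" and N :: "real measure"
  assumes lip: "L-lipschitz_on UNIV f"
    and N: "prob_space N" and N_borel: "sets N = sets borel"
    and a: "a < 1" and supp: "AE \<nu> in N. \<nu> \<in> {-a..a}"
    and fx: "f x \<noteq> 0" and C: "0 < C"
  shows "integrable (std_gaussian \<Otimes>\<^sub>M (N \<Otimes>\<^sub>M (N \<Otimes>\<^sub>M N))) (noisy_zo_inner f C x y)"
proof -
  interpret M: prob_space "N \<Otimes>\<^sub>M (N \<Otimes>\<^sub>M N)"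
    by (intro prob_space_pair N)
  interpret P: pair_prob_space "std_gaussian :: 'a measure" "N \<Otimes>\<^sub>M (N \<Otimes>\<^sub>M N)"
    by (intro pair_prob_space.intro pair_sigma_finite.intro prob_space_std_gaussian
        M.prob_space_axioms prob_space_imp_sigma_finite)
  note [measurable_cong] = N_borel
  have [measurable]: "f \<in> borel_measurable borel"
    by (rule borel_measurable_lipschitz_on[OF lip])
  define \<mu>\<^sub>0 where "\<mu>\<^sub>0 = C * sqrt (\<bar>f x\<bar> * (1 - a))"
  define Q where "Q m \<longleftrightarrow> fst m \<in> {-a..a} \<and> fst (snd m) \<in> {-a..a} \<and> snd (snd m) \<in> {-a..a}"
    for m :: "real \<times> real \<times> real"
  have "AE m in N \<Otimes>\<^sub>M (N \<Otimes>\<^sub>M N). Q m"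
    unfolding Q_def by (rule AE_pair_measure_triple[OF N _ supp]) simp
  then have AE_Q: "AE p in (std_gaussian :: 'a measure) \<Otimes>\<^sub>M (N \<Otimes>\<^sub>M (N \<Otimes>\<^sub>M N)). Q (snd p)"
  proof (intro P.AE_pair_measure[where P="\<lambda>p. Q (snd p)"])
    show "{p \<in> space ((std_gaussian :: 'a measure) \<Otimes>\<^sub>M (N \<Otimes>\<^sub>M (N \<Otimes>\<^sub>M N))). Q (snd p)}
        \<in> sets ((std_gaussian :: 'a measure) \<Otimes>\<^sub>M (N \<Otimes>\<^sub>M (N \<Otimes>\<^sub>M N)))"
      unfolding Q_def by measurable
  qed simp
  show ?thesis
  proof (rule integrable_std_gaussian_pair_quadratic_bound[OF M.prob_space_axioms _ eventually_mono[OF AE_Q]])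
    show "noisy_zo_inner f C x y \<in> borel_measurable (std_gaussian \<Otimes>\<^sub>M (N \<Otimes>\<^sub>M (N \<Otimes>\<^sub>M N)))"
      unfolding noisy_zo_inner_def Let_def by measurable
    fix p :: "'a \<times> real \<times> real \<times> real"
    obtain u \<nu>' \<nu>1 \<nu>0 where p: "p = (u, \<nu>', \<nu>1, \<nu>0)" by (cases p)
    assume "Q (snd p)"
    then have "\<nu>' \<in> {-a..a}" "\<bar>1 + \<nu>1\<bar> \<le> 1 + \<bar>a\<bar>" "\<bar>(1 + \<nu>1) - (1 + \<nu>0)\<bar> \<le> 2 * \<bar>a\<bar>"
      by (auto simp: p Q_def)
    from abs_noisy_quotient_le[OF lip noisy_radius_bounds(1,2)[OF this(1) a fx C] this(2,3)]
    show "\<bar>noisy_zo_inner f C x y p\<bar>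
        \<le> ((2 * \<bar>a\<bar> * \<bar>f x\<bar> / \<mu>\<^sub>0 + (1 + \<bar>a\<bar>) * L) * norm (x - y)) * (1 + (norm (fst p))\<^sup>2)"
      by (simp add: noisy_zo_inner_def Let_def p \<mu>\<^sub>0_def)
  qed
qed

lemma integral_std_gaussian_noisy_zo_inner_ge:
  fixes f :: "'a::euclidean_space \<Rightarrow> real"
  assumes cvx: "convex_on UNIV f" and grad: "\<And>x. (f has_derivative (\<lambda>h. g x \<bullet> h)) (at x)"
    and lip0: "L0-lipschitz_on UNIV f" and lip1: "L1-lipschitz_on UNIV g"
    and \<nu>: "\<nu>' \<in> {-a..a}" "\<nu>1 \<in> {-a..a}" and a: "a < 1" and fx: "f x \<noteq> 0" and C: "0 < C"
  shows "(1 + \<nu>1) * (f x - f y - C\<^sup>2 * L1 * real DIM('a) / 2 * \<bar>f x\<bar> * (1 + \<nu>'))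
       \<le> (\<integral>u. noisy_zo_inner f C x y (u, \<nu>', \<nu>1, \<nu>0) \<partial>std_gaussian)"
proof -
  define \<mu> where "\<mu> = C * sqrt \<bar>f x * (1 + \<nu>')\<bar>"
  have \<mu>: "0 < \<mu>" "\<mu>\<^sup>2 = C\<^sup>2 * \<bar>f x\<bar> * (1 + \<nu>')"
    using noisy_radius_bounds[OF \<nu>(1) a fx C] unfolding \<mu>_def by linarith+
  have "(1 + \<nu>1) * (f x - f y - C\<^sup>2 * L1 * real DIM('a) / 2 * \<bar>f x\<bar> * (1 + \<nu>'))
      = (1 + \<nu>1) * (f x - f y - \<mu>\<^sup>2 * L1 * real DIM('a) / 2)"
    by (simp add: \<mu>(2))
  also have "\<dots> \<le> (\<integral>u. ((f (x + \<mu> *\<^sub>R u) * (1 + \<nu>1) - f x * (1 + \<nu>0)) / \<mu>) * (u \<bullet> (x - y))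
      \<partial>std_gaussian)"
    using \<mu>(1) \<nu>(2) a by (intro std_gaussian_noisy_quotient_inner_ge[OF cvx grad lip0 lip1]) auto
  finally show ?thesis
    by (simp add: noisy_zo_inner_def Let_def \<mu>_def)
qed

lemma expectation_noisy_zo_inner_ge:
  fixes f :: "'a::euclidean_space \<Rightarrow> real" and N :: "real measure"
  assumes cvx: "convex_on UNIV f" and grad: "\<And>x. (f has_derivative (\<lambda>h. g x \<bullet> h)) (at x)"
    and lip0: "L0-lipschitz_on UNIV f" and lip1: "L1-lipschitz_on UNIV g"
    and N: "prob_space N" and N_borel: "sets N = sets borel"
    and a: "a < 1" and supp: "AE \<nu> in N. \<nu> \<in> {-a..a}" and mean0: "(\<integral>\<nu>. \<nu> \<partial>N) = 0"
    and fx: "f x \<noteq> 0" and C: "0 < C"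
  shows "f x - f y - C\<^sup>2 * L1 * real DIM('a) / 2 * \<bar>f x\<bar>
       \<le> (\<integral>p. noisy_zo_inner f C x y p \<partial>(std_gaussian \<Otimes>\<^sub>M (N \<Otimes>\<^sub>M (N \<Otimes>\<^sub>M N))))"
proof -
  interpret M: prob_space "N \<Otimes>\<^sub>M (N \<Otimes>\<^sub>M N)"
    by (intro prob_space_pair N)
  interpret P: pair_prob_space "std_gaussian :: 'a measure" "N \<Otimes>\<^sub>M (N \<Otimes>\<^sub>M N)"
    by (intro pair_prob_space.intro pair_sigma_finite.intro prob_space_std_gaussian
        M.prob_space_axioms prob_space_imp_sigma_finite)
  define F where "F = noisy_zo_inner f C x y"
  define K0 where "K0 = f x - f y"
  define K1 where "K1 = C\<^sup>2 * L1 * real DIM('a) / 2 * \<bar>f x\<bar>"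
  have int_F: "integrable (std_gaussian \<Otimes>\<^sub>M (N \<Otimes>\<^sub>M (N \<Otimes>\<^sub>M N))) F"
    unfolding F_def by (rule integrable_noisy_zo_inner[OF lip0 N N_borel a supp fx C])
  have "AE m in N \<Otimes>\<^sub>M (N \<Otimes>\<^sub>M N). fst m \<in> {-a..a} \<and> fst (snd m) \<in> {-a..a} \<and> snd (snd m) \<in> {-a..a}"
    by (rule AE_pair_measure_triple[OF N _ supp]) (simp add: N_borel)
  then have AE_inner: "AE m in N \<Otimes>\<^sub>M (N \<Otimes>\<^sub>M N).
      (1 + fst (snd m)) * (K0 - K1 * (1 + fst m)) \<le> (\<integral>u. F (u, m) \<partial>std_gaussian)"
  proof (rule eventually_mono)
    fix m :: "real \<times> real \<times> real"
    obtain \<nu>' \<nu>1 \<nu>0 where m: "m = (\<nu>', \<nu>1, \<nu>0)" by (cases m)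
    assume "fst m \<in> {-a..a} \<and> fst (snd m) \<in> {-a..a} \<and> snd (snd m) \<in> {-a..a}"
    then show "(1 + fst (snd m)) * (K0 - K1 * (1 + fst m)) \<le> (\<integral>u. F (u, m) \<partial>std_gaussian)"
      using integral_std_gaussian_noisy_zo_inner_ge[OF cvx grad lip0 lip1 _ _ a fx C, of \<nu>' \<nu>1 y \<nu>0]
      by (simp add: m F_def K0_def K1_def)
  qed
  have "K0 - K1 = (\<integral>m. (1 + fst (snd m)) * (K0 - K1 * (1 + fst m)) \<partial>(N \<Otimes>\<^sub>M (N \<Otimes>\<^sub>M N)))"
    by (rule integral_noise_affine_product(2)[OF N N_borel supp mean0, symmetric])
  also have "\<dots> \<le> (\<integral>m. (\<integral>u. F (u, m) \<partial>std_gaussian) \<partial>(N \<Otimes>\<^sub>M (N \<Otimes>\<^sub>M N)))"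
    using AE_inner int_F by (intro integral_mono_AE integral_noise_affine_product(1)[OF N N_borel supp mean0]
        P.integrable_snd) auto
  also have "\<dots> = integral\<^sup>L (std_gaussian \<Otimes>\<^sub>M (N \<Otimes>\<^sub>M (N \<Otimes>\<^sub>M N))) F"
    using P.integral_snd[of "\<lambda>u m. F (u, m)"] int_F by simp
  finally show ?thesis
    unfolding F_def K0_def K1_def .
qed

theorem lemma5:
  fixes f :: "'a::euclidean_space \<Rightarrow> real"
    and g :: "'a \<Rightarrow> 'a"
    and L0 L1 :: real
    and xstar xk :: 'a
    and N :: "real measure"
    and \<sigma>r a b :: real
  assumes convex: "convex_on UNIV f"
    and grad: "\<And>x. (f has_derivative (\<lambda>h. g x \<bullet> h)) (at x)"
    and grad_cont: "continuous_on UNIV g"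
    and lip0: "\<And>x y. \<bar>f x - f y\<bar> \<le> L0 * norm (x - y)"
    and lip1: "\<And>x y. norm (g x - g y) \<le> L1 * norm (x - y)"
    and L1_pos: "L1 > 0"
    and minimizer: "\<And>y. f xstar \<le> f y"
    and N_prob: "prob_space N"
    and N_borel: "sets N = sets borel"
    and a_lt: "a < 1"
    and supp: "AE \<nu> in N. \<nu> \<in> {-a..a}"
    and mean0: "(\<integral>\<nu>. \<nu> \<partial>N) = 0"
    and var: "(\<integral>\<nu>. \<nu>\<^sup>2 \<partial>N) = \<sigma>r\<^sup>2"
    and var_pos: "\<sigma>r\<^sup>2 > 0"
    and inv_bound: "(\<integral>\<nu>. 1 / (1 + \<nu>) \<partial>N) \<le> b"
    and fxk: "f xk \<noteq> 0"
  shows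
    "let n = real DIM('a);
         C4 = (16 * \<sigma>r\<^sup>2 * n / (L1\<^sup>2 * (1 + 3 * \<sigma>r\<^sup>2) * (n + 6) ^ 3)) powr (1/4)
     in (\<integral>(u, \<nu>', \<nu>1, \<nu>0).
           (let \<mu> = C4 * sqrt \<bar>f xk * (1 + \<nu>')\<bar>;
                s = ((f (xk + \<mu> *\<^sub>R u) * (1 + \<nu>1) - f xk * (1 + \<nu>0)) / \<mu>) *\<^sub>R u
            in s \<bullet> (xk - xstar))
         \<partial>(std_gaussian \<Otimes>\<^sub>M (N \<Otimes>\<^sub>M (N \<Otimes>\<^sub>M N))))
        \<ge> f xk - f xstar - C4\<^sup>2 * L1 * n / 2 * \<bar>f xk\<bar>"
proof -
  have "0 < 16 * \<sigma>r\<^sup>2 * real DIM('a) / (L1\<^sup>2 * (1 + 3 * \<sigma>r\<^sup>2) * (real DIM('a) + 6) ^ 3)"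
    using var_pos L1_pos by (intro divide_pos_pos mult_pos_pos) (auto intro: add_pos_nonneg)
  then have C4: "0 < (16 * \<sigma>r\<^sup>2 * real DIM('a) / (L1\<^sup>2 * (1 + 3 * \<sigma>r\<^sup>2) * (real DIM('a) + 6) ^ 3)) powr (1/4)"
    by (simp only: powr_gt_zero)
  have "L0-lipschitz_on UNIV f"
    by (rule lipschitz_on_UNIV_euclideanI[OF lip0])
  moreover have "L1-lipschitz_on UNIV g"
    using lip1 L1_pos by (intro lipschitz_onI) (auto simp: dist_norm)
  ultimately show ?thesis
    using expectation_noisy_zo_inner_ge[OF convex grad _ _ N_prob N_borel a_lt supp mean0 fxk C4]
    unfolding noisy_zo_inner_def Let_def inner_scaleR_left by simp
qed

end
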